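(* Let $m \in \mathbb{N}$ and let $G$ be a subdivision of the star $K_{1,m}$ (i.e., a graph obtained from $K_{1,m}$ by replacing its edges with internally disjoint paths of arbitrary positive lengths). If $m=1$, then the total graph $T(G)$ is equitably $k$-choosable for every $k \geq 3$. If $m \geq 2$, then $T(G)$ is equitably $k$-choosable for every $k \geq m+1$.
   Context: All graphs are finite and simple. The total graph $T(G)$ of a graph $G$ has vertex set $V(G)\cup E(G)$, two elements being adjacent in $T(G)$ iff they are adjacent or incident in $G$. A $k$-assignment $L$ for a graph $G$ assigns to each vertex $v$ a set $L(v)$ of exactly $k$ colors. An equitable $L$-coloring of $G$ is a proper coloring $f$ of $G$ with $f(v)\in L(v)$ for all $v$, such that no color is used on more than $\lceil |V(G)|/k\rceil$ vertices. $G$ is equitably $k$-choosable if it has an equitable $L$-coloring for every $k$-assignment $L$. *)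

theory Defs
  imports Complex_Main
begin

text \<open>Simple graphs are given by a vertex set V and an edge set E of 2-element subsets.
  The graphs considered here are built from paths, so they are automatically finite and simple.\<close>

definition path_edges :: "'a list \<Rightarrow> 'a set set" where
  "path_edges xs = {{xs ! i, xs ! Suc i} | i. Suc i < length xs}"

definition star_subdivision :: "'a set \<Rightarrow> 'a set set \<Rightarrow> nat \<Rightarrow> bool" where
  "star_subdivision V E m \<longleftrightarrow>
     (\<exists>c P. (\<forall>i<m. distinct (P i) \<and> length (P i) \<ge> 2 \<and> hd (P i) = c)
         \<and> (\<forall>i<m. \<forall>j<m. i \<noteq> j \<longrightarrow> set (P i) \<inter> set (P j) = {c})
         \<and> V = insert c (\<Union>i<m. set (P i))
         \<and> E = (\<Union>i<m. path_edges (P i)))"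

text \<open>Total graph T(G): vertex set V \<union> E (as a disjoint sum), adjacency = adjacent or incident.\<close>
definition total_vertices :: "'a set \<Rightarrow> 'a set set \<Rightarrow> ('a + 'a set) set" where
  "total_vertices V E = Inl ` V \<union> Inr ` E"

fun total_adj :: "'a set set \<Rightarrow> ('a + 'a set) \<Rightarrow> ('a + 'a set) \<Rightarrow> bool" where
  "total_adj E (Inl u) (Inl v) = ({u, v} \<in> E)"
| "total_adj E (Inl u) (Inr e) = (u \<in> e)"
| "total_adj E (Inr e) (Inl u) = (u \<in> e)"
| "total_adj E (Inr e) (Inr f) = (e \<noteq> f \<and> e \<inter> f \<noteq> {})"

definition equitably_choosable :: "'v set \<Rightarrow> ('v \<Rightarrow> 'v \<Rightarrow> bool) \<Rightarrow> nat \<Rightarrow> bool" where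
  "equitably_choosable W adj k \<longleftrightarrow>
     (\<forall>L :: 'v \<Rightarrow> nat set. (\<forall>v\<in>W. finite (L v) \<and> card (L v) = k) \<longrightarrow>
        (\<exists>f. (\<forall>v\<in>W. f v \<in> L v)
           \<and> (\<forall>u\<in>W. \<forall>v\<in>W. adj u v \<longrightarrow> f u \<noteq> f v)
           \<and> (\<forall>col. card {v\<in>W. f v = col} \<le> nat \<lceil>real (card W) / real k\<rceil>)))"

end

theory Submission
  imports Defs
begin

text \<open>List the elements of each arm of T(G) from the centre outwards as v0, e1, v1, e2, ...
  Then T(G) is a subgraph of the model graph in which elements at distance 1 or 2 along an arm
  are adjacent, and the centre together with the first edges of all arms forms a clique; a
  list colouring of the model graph is one of T(G). The model graph, with arms of arbitrary
  lengths, is equitably k-choosable for k \<ge> max 3 (m + 1) by induction on its size, using the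
  lemma of Kierstead and Kostochka: if a k-set S admits an ordering x1, ..., xk in which xi has
  at most i - 1 neighbours outside S, an equitable list colouring of the rest extends to S.
  If some arm has at least 3 elements, S is taken from the ends of the arms, at least three of
  them from one arm, which keeps the degrees small; otherwise every arm has at most 2 elements
  and S is chosen directly.\<close>

text \<open>For card S = k this says that S can be listed as x1, ..., xk with d xi \<le> i - 1,
  the degree condition of Kierstead and Kostochka.\<close>
definition kk_condition :: "'v set \<Rightarrow> ('v \<Rightarrow> nat) \<Rightarrow> nat \<Rightarrow> bool" where
  "kk_condition S d k \<longleftrightarrow> (\<forall>v\<ge>1. card {x\<in>S. v \<le> d x} \<le> k - v)"

lemma kk_condition_remove_max:
  assumes cond: "kk_condition S d k" and fin: "finite S" and card: "card S \<le> k"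
    and x0: "x0 \<in> S" "\<forall>y\<in>S. d y \<le> d x0"
  shows "kk_condition (S - {x0}) (\<lambda>x. Suc (d x)) k"
  unfolding kk_condition_def
proof (intro allI impI)
  fix v :: nat assume "1 \<le> v"
  show "card {x\<in>S - {x0}. v \<le> Suc (d x)} \<le> k - v"
  proof (cases v)
    case (Suc w)
    show ?thesis
    proof (cases "w = 0")
      case True
      then have "{x\<in>S - {x0}. v \<le> Suc (d x)} = S - {x0}" using Suc by auto
      then show ?thesis using Suc True card fin x0(1) by simp
    next
      case False
      have eq: "{x\<in>S - {x0}. v \<le> Suc (d x)} = {x\<in>S. w \<le> d x} - {x0}"
        using Suc by auto
      show ?thesis
      proof (cases "w \<le> d x0")
        case True
        have "card {x\<in>S. w \<le> d x} \<le> k - w" using cond False unfolding kk_condition_def by simp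
        then show ?thesis unfolding eq using True x0(1) fin Suc by simp
      next
        case False
        then have "{x\<in>S. w \<le> d x} = {}" using x0(2) le_trans by blast
        then show ?thesis unfolding eq by (metis empty_Diff card.empty zero_le)
      qed
    qed
  qed (use \<open>1 \<le> v\<close> in simp)
qed

text \<open>Colour greedily in order of decreasing d: the element with the largest d still has a
  free colour, and raising the bounds of the others by one accounts for the colour it takes.\<close>
lemma inj_list_choice_avoiding:
  assumes "finite S" "card S \<le> k"
    and "\<forall>x\<in>S. finite (F x) \<and> card (F x) \<le> d x"
    and "\<forall>x\<in>S. finite (Lst x) \<and> card (Lst x) = k"
    and "kk_condition S d k"
  shows "\<exists>g. (\<forall>x\<in>S. g x \<in> Lst x - F x) \<and> inj_on g S"
  using assms
proof (induction "card S" arbitrary: S F d)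
  case 0
  then show ?case by auto
next
  case (Suc n)
  note fin = Suc.prems(1) and cond = Suc.prems(5)
  have "S \<noteq> {}" using Suc.hyps(2) by auto
  then have "Max (d ` S) \<in> d ` S" using fin by simp
  then obtain x0 where "x0 \<in> S" "d x0 = Max (d ` S)" by (metis imageE)
  then have x0: "x0 \<in> S" "\<forall>y\<in>S. d y \<le> d x0" using fin by auto
  have "d x0 < k"
  proof (cases "d x0 = 0")
    case True
    then show ?thesis using Suc.hyps(2) Suc.prems(2) by simp
  next
    case False
    have "0 < card {x\<in>S. d x0 \<le> d x}" using fin x0 by (auto simp: card_gt_0_iff)
    moreover have "card {x\<in>S. d x0 \<le> d x} \<le> k - d x0"
      using cond False unfolding kk_condition_def by simp
    ultimately show ?thesis by simp
  qed
  moreover have "finite (F x0)" "card (F x0) \<le> d x0" "card (Lst x0) = k"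
    using Suc.prems(3,4) x0(1) by auto
  ultimately have "\<not> Lst x0 \<subseteq> F x0" by (metis card_mono leD le_trans)
  then obtain col where col: "col \<in> Lst x0 - F x0" by blast
  have "\<exists>g. (\<forall>x\<in>S - {x0}. g x \<in> Lst x - insert col (F x)) \<and> inj_on g (S - {x0})"
  proof (rule Suc.hyps(1))
    show "n = card (S - {x0})" using Suc.hyps(2) x0(1) fin by simp
    show "kk_condition (S - {x0}) (\<lambda>x. Suc (d x)) k"
      using kk_condition_remove_max[OF cond fin Suc.prems(2) x0] .
    show "finite (S - {x0})" "card (S - {x0}) \<le> k" using fin Suc.hyps(2) Suc.prems(2) x0(1) by auto
    show "\<forall>x\<in>S - {x0}. finite (Lst x) \<and> card (Lst x) = k" using Suc.prems(4) by blast
    show "\<forall>x\<in>S - {x0}. finite (insert col (F x)) \<and> card (insert col (F x)) \<le> Suc (d x)"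
      using Suc.prems(3) by (simp add: card_insert_if le_SucI)
  qed
  then obtain g where g: "\<forall>x\<in>S - {x0}. g x \<in> Lst x - insert col (F x)" "inj_on g (S - {x0})"
    by blast
  have "S = insert x0 (S - {x0})" using x0(1) by blast
  then have "inj_on (g(x0 := col)) S"
    using g col by (auto simp: inj_on_def)
  moreover have "\<forall>x\<in>S. (g(x0 := col)) x \<in> Lst x - F x" using g(1) col by auto
  ultimately show ?case by blast
qed

lemma ceiling_div_add_one:
  assumes "1 \<le> k" "k \<le> n"
  shows "nat \<lceil>real (n - k) / real k\<rceil> + 1 = nat \<lceil>real n / real k\<rceil>"
proof -
  have "real n / real k = real (n - k) / real k + 1"
    using assms by (simp add: of_nat_diff field_simps)
  moreover have "0 \<le> real (n - k) / real k" by simp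
  ultimately show ?thesis by linarith
qed

lemma card_fibre_le_one_if_inj_on:
  assumes "inj_on g S"
  shows "card {x\<in>S. g x = col} \<le> 1"
proof -
  have "\<forall>x\<in>{x\<in>S. g x = col}. \<forall>y\<in>{x\<in>S. g x = col}. x = y"
    using assms by (auto simp: inj_on_def)
  then show ?thesis using card_le_Suc0_iff_eq[of "{x\<in>S. g x = col}"] by fastforce
qed

lemma equitably_choosable_if_card_le:
  assumes fin: "finite W" and irr: "irreflp adj" and small: "card W \<le> k"
  shows "equitably_choosable W adj k"
  unfolding equitably_choosable_def
proof (intro allI impI)
  fix Lst :: "_ \<Rightarrow> nat set"
  assume "\<forall>v\<in>W. finite (Lst v) \<and> card (Lst v) = k"
  moreover have "kk_condition W (\<lambda>_. 0) k" by (simp add: kk_condition_def)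
  ultimately obtain g where g: "\<forall>x\<in>W. g x \<in> Lst x" "inj_on g W"
    using inj_list_choice_avoiding[of W k "\<lambda>_. {}" "\<lambda>_. 0" Lst] fin small by auto
  have "card {v\<in>W. g v = col} \<le> nat \<lceil>real (card W) / real k\<rceil>" for col
  proof (cases "{v\<in>W. g v = col} = {}")
    case True
    then show ?thesis by (metis card.empty zero_le)
  next
    case False
    then have "0 < card W" using fin by (auto simp: card_gt_0_iff)
    then have "0 < real (card W) / real k" using small by simp
    then show ?thesis using card_fibre_le_one_if_inj_on[OF g(2), of col] by linarith
  qed
  moreover have "\<forall>u\<in>W. \<forall>v\<in>W. adj u v \<longrightarrow> g u \<noteq> g v"
    using g(2) irr by (metis inj_on_def irreflpD)
  ultimately show "\<exists>f. (\<forall>v\<in>W. f v \<in> Lst v) \<and> (\<forall>u\<in>W. \<forall>v\<in>W. adj u v \<longrightarrow> f u \<noteq> f v) \<and>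
           (\<forall>col. card {v\<in>W. f v = col} \<le> nat \<lceil>real (card W) / real k\<rceil>)"
    using g(1) by blast
qed

lemma card_colour_class_extend:
  assumes fin: "finite W" and S: "S \<subseteq> W" "card S = k" "1 \<le> k" and g: "inj_on g S"
    and f: "card {v\<in>W - S. f v = col} \<le> nat \<lceil>real (card (W - S)) / real k\<rceil>"
  shows "card {v\<in>W. (if v \<in> S then g v else f v) = col} \<le> nat \<lceil>real (card W) / real k\<rceil>"
proof -
  have "{v\<in>W. (if v \<in> S then g v else f v) = col} = {v\<in>W - S. f v = col} \<union> {x\<in>S. g x = col}"
    using S(1) by auto
  then have "card {v\<in>W. (if v \<in> S then g v else f v) = col}
      \<le> card {v\<in>W - S. f v = col} + card {x\<in>S. g x = col}"
    by (metis card_Un_le)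
  also have "\<dots> \<le> nat \<lceil>real (card (W - S)) / real k\<rceil> + 1"
    using f card_fibre_le_one_if_inj_on[OF g] by (meson add_mono)
  also have "\<dots> = nat \<lceil>real (card W) / real k\<rceil>"
  proof -
    have "finite S" using fin S(1) finite_subset by blast
    then have "card (W - S) = card W - k" using S by (simp add: card_Diff_subset)
    moreover have "k \<le> card W" using card_mono[OF fin S(1)] S(2) by simp
    ultimately show ?thesis using ceiling_div_add_one[OF S(3)] by simp
  qed
  finally show ?thesis .
qed

lemma extended_colouring_proper:
  assumes sym: "symp adj" and irr: "irreflp adj"
    and f: "\<forall>u\<in>W - S. \<forall>v\<in>W - S. adj u v \<longrightarrow> f u \<noteq> f v"
    and g: "inj_on g S" "\<forall>x\<in>S. g x \<notin> f ` {y\<in>W - S. adj x y}"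
    and uv: "u \<in> W" "v \<in> W" "adj u v"
  shows "(if u \<in> S then g u else f u) \<noteq> (if v \<in> S then g v else f v)"
proof -
  have across: "g x \<noteq> f y" if "x \<in> S" "y \<in> W - S" "adj x y" for x y
    using g(2) that by blast
  show ?thesis
  proof (cases "u \<in> S"; cases "v \<in> S")
    assume "u \<in> S" "v \<in> S"
    moreover have "u \<noteq> v" using irr uv(3) by (metis irreflpD)
    ultimately show ?thesis using g(1) by (auto simp: inj_on_def)
  next
    assume "u \<notin> S" "v \<in> S"
    then show ?thesis using across[of v u] uv sym by (auto dest: sympD)
  qed (use across f uv in auto)
qed

text \<open>Kierstead and Kostochka: colour W - S first and then S with distinct colours; each colour
  class grows by at most one, in step with the bound on class sizes.\<close>
lemma equitably_choosable_by_removal: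
  assumes fin: "finite W" and sym: "symp adj" and irr: "irreflp adj"
    and S: "S \<subseteq> W" "card S = k" "1 \<le> k"
    and rest: "equitably_choosable (W - S) adj k"
    and deg: "\<forall>x\<in>S. card {y\<in>W - S. adj x y} \<le> d x" and cond: "kk_condition S d k"
  shows "equitably_choosable W adj k"
  unfolding equitably_choosable_def
proof (intro allI impI)
  fix Lst :: "_ \<Rightarrow> nat set"
  assume L: "\<forall>v\<in>W. finite (Lst v) \<and> card (Lst v) = k"
  then have "\<forall>v\<in>W - S. finite (Lst v) \<and> card (Lst v) = k" by blast
  then obtain f where f: "\<forall>v\<in>W - S. f v \<in> Lst v"
      "\<forall>u\<in>W - S. \<forall>v\<in>W - S. adj u v \<longrightarrow> f u \<noteq> f v"
      "\<forall>col. card {v\<in>W - S. f v = col} \<le> nat \<lceil>real (card (W - S)) / real k\<rceil>"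
    using rest unfolding equitably_choosable_def by blast
  define F where "F x = f ` {y\<in>W - S. adj x y}" for x
  have finS: "finite S" using fin S(1) finite_subset by blast
  have "finite (F x) \<and> card (F x) \<le> d x" if "x \<in> S" for x
  proof -
    have "card (F x) \<le> card {y\<in>W - S. adj x y}" unfolding F_def using fin by (simp add: card_image_le)
    then show ?thesis using deg that fin by (auto simp: F_def)
  qed
  moreover have "\<forall>x\<in>S. finite (Lst x) \<and> card (Lst x) = k" using L S(1) by blast
  ultimately obtain g where g: "\<forall>x\<in>S. g x \<in> Lst x - F x" "inj_on g S"
    using inj_list_choice_avoiding[OF finS _ _ _ cond] S(2) by blast
  define h where "h x = (if x \<in> S then g x else f x)" for x
  have "\<forall>v\<in>W. h v \<in> Lst v" using f(1) g(1) by (auto simp: h_def)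
  moreover have "\<forall>x\<in>S. g x \<notin> f ` {y\<in>W - S. adj x y}" using g(1) by (auto simp: F_def)
  then have "\<forall>u\<in>W. \<forall>v\<in>W. adj u v \<longrightarrow> h u \<noteq> h v"
    using extended_colouring_proper[OF sym irr f(2) g(2)] unfolding h_def by blast
  moreover have "card {v\<in>W. h v = col} \<le> nat \<lceil>real (card W) / real k\<rceil>" for col
    unfolding h_def using card_colour_class_extend[OF fin S g(2)] f(3) by blast
  ultimately show "\<exists>f. (\<forall>v\<in>W. f v \<in> Lst v) \<and> (\<forall>u\<in>W. \<forall>v\<in>W. adj u v \<longrightarrow> f u \<noteq> f v) \<and>
           (\<forall>col. card {v\<in>W. f v = col} \<le> nat \<lceil>real (card W) / real k\<rceil>)"
    by blast
qed

lemma equitably_choosable_transfer: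
  assumes ec: "equitably_choosable A adjA k" and bij: "bij_betw h A B" and finA: "finite A"
    and adj: "\<forall>x\<in>A. \<forall>y\<in>A. adjB (h x) (h y) \<longrightarrow> adjA x y"
  shows "equitably_choosable B adjB k"
  unfolding equitably_choosable_def
proof (intro allI impI)
  fix Lst :: "_ \<Rightarrow> nat set"
  assume "\<forall>v\<in>B. finite (Lst v) \<and> card (Lst v) = k"
  then have "\<forall>v\<in>A. finite (Lst (h v)) \<and> card (Lst (h v)) = k"
    using bij by (auto simp: bij_betw_def)
  then obtain f where f: "\<forall>v\<in>A. f v \<in> Lst (h v)"
      "\<forall>u\<in>A. \<forall>v\<in>A. adjA u v \<longrightarrow> f u \<noteq> f v"
      "\<forall>col. card {v\<in>A. f v = col} \<le> nat \<lceil>real (card A) / real k\<rceil>"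
    using ec[unfolded equitably_choosable_def, THEN spec[of _ "\<lambda>v. Lst (h v)"]] by blast
  define i where "i = inv_into A h"
  have i: "\<forall>y\<in>B. i y \<in> A \<and> h (i y) = y"
    using bij by (auto simp: i_def bij_betw_def inv_into_into f_inv_into_f)
  have "card {v\<in>B. f (i v) = col} \<le> nat \<lceil>real (card B) / real k\<rceil>" for col
  proof -
    have "{v\<in>B. f (i v) = col} \<subseteq> h ` {v\<in>A. f v = col}"
    proof
      fix y assume "y \<in> {v\<in>B. f (i v) = col}"
      then show "y \<in> h ` {v\<in>A. f v = col}" using i by (metis (mono_tags, lifting) image_iff mem_Collect_eq)
    qed
    then have "card {v\<in>B. f (i v) = col} \<le> card (h ` {v\<in>A. f v = col})"
      using finA by (simp add: card_mono)
    also have "\<dots> \<le> card {v\<in>A. f v = col}" using finA by (simp add: card_image_le)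
    also have "\<dots> \<le> nat \<lceil>real (card A) / real k\<rceil>" using f(3) by blast
    also have "card A = card B" using bij by (rule bij_betw_same_card)
    finally show ?thesis .
  qed
  moreover have "\<forall>v\<in>B. f (i v) \<in> Lst v" using f(1) i by metis
  moreover have "\<forall>u\<in>B. \<forall>v\<in>B. adjB u v \<longrightarrow> f (i u) \<noteq> f (i v)" using f(2) i adj by metis
  ultimately show "\<exists>f. (\<forall>v\<in>B. f v \<in> Lst v) \<and> (\<forall>u\<in>B. \<forall>v\<in>B. adjB u v \<longrightarrow> f u \<noteq> f v) \<and>
           (\<forall>col. card {v\<in>B. f v = col} \<le> nat \<lceil>real (card B) / real k\<rceil>)"
    by (intro exI[of _ "\<lambda>v. f (i v)"]) blast
qed

lemma kk_condition_image:
  assumes "inj_on f S" "kk_condition S (\<lambda>x. d (f x)) k"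
  shows "kk_condition (f ` S) d k"
  unfolding kk_condition_def
proof (intro allI impI)
  fix v :: nat assume "1 \<le> v"
  have "{y\<in>f ` S. v \<le> d y} = f ` {x\<in>S. v \<le> d (f x)}" by auto
  moreover have "inj_on f {x\<in>S. v \<le> d (f x)}" using assms(1) by (rule inj_on_subset) auto
  ultimately show "card {y\<in>f ` S. v \<le> d y} \<le> k - v"
    using assms(2) \<open>1 \<le> v\<close> by (simp add: card_image kk_condition_def)
qed

lemma kk_condition_single_hub:
  assumes "finite S" "x0 \<in> S" "d x0 < k" "\<forall>x\<in>S - {x0}. d x \<le> 2"
    and "card {x\<in>S. 1 \<le> d x} \<le> k - 1" "card {x\<in>S. 2 \<le> d x} \<le> k - 2"
  shows "kk_condition S d k"
  unfolding kk_condition_def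
proof (intro allI impI)
  fix v :: nat assume "1 \<le> v"
  consider "v = 1" | "v = 2" | "3 \<le> v" using \<open>1 \<le> v\<close> by linarith
  then show "card {x\<in>S. v \<le> d x} \<le> k - v"
  proof cases
    case 3
    then have sub: "{x\<in>S. v \<le> d x} \<subseteq> {x0}" using assms(4) by force
    show ?thesis
    proof (cases "v \<le> d x0")
      case True
      then show ?thesis using card_mono[OF _ sub] assms(3) by simp
    next
      case False
      then have "{x\<in>S. v \<le> d x} = {}" using sub by auto
      then show ?thesis by (metis card.empty zero_le)
    qed
  qed (use assms in simp_all)
qed

text \<open>None encodes the centre and Some (i, a) the a-th element after the centre on arm i, for
  1 \<le> a \<le> L i. Arms ending in an edge (odd L i) are needed for the induction.\<close>
fun spider_adj :: "(nat \<times> nat) option \<Rightarrow> (nat \<times> nat) option \<Rightarrow> bool" where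
  "spider_adj None None = False"
| "spider_adj None (Some (i, a)) = (a \<le> 2)"
| "spider_adj (Some (i, a)) None = (a \<le> 2)"
| "spider_adj (Some (i, a)) (Some (j, b)) =
     ((i = j \<and> a \<noteq> b \<and> a \<le> b + 2 \<and> b \<le> a + 2) \<or> (i \<noteq> j \<and> a = 1 \<and> b = 1))"

definition spider_verts :: "nat \<Rightarrow> (nat \<Rightarrow> nat) \<Rightarrow> (nat \<times> nat) option set" where
  "spider_verts m L = insert None (Some ` (SIGMA i:{..<m}. {1..L i}))"

lemma Some_mem_spider_verts [simp]:
  "Some (i, a) \<in> spider_verts m L \<longleftrightarrow> i < m \<and> 1 \<le> a \<and> a \<le> L i"
  by (auto simp: spider_verts_def)

lemma None_mem_spider_verts [simp]: "None \<in> spider_verts m L"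
  by (simp add: spider_verts_def)

lemma symp_spider_adj: "symp spider_adj"
proof (rule sympI)
  show "spider_adj v u" if "spider_adj u v" for u v using that by (cases u; cases v) auto
qed

lemma irreflp_spider_adj: "irreflp spider_adj"
proof (rule irreflpI)
  show "\<not> spider_adj u u" for u by (cases u) auto
qed

lemma finite_spider_verts [simp]: "finite (spider_verts m L)"
  by (simp add: spider_verts_def)

lemma card_spider_verts: "card (spider_verts m L) = Suc (\<Sum>i<m. L i)"
proof -
  have "card (Some ` (SIGMA i:{..<m}. {1..L i})) = (\<Sum>i<m. L i)"
    by (simp add: card_image card_SigmaI)
  then show ?thesis by (simp add: spider_verts_def)
qed

definition arm_tails :: "nat \<Rightarrow> (nat \<Rightarrow> nat) \<Rightarrow> (nat \<Rightarrow> nat) \<Rightarrow> (nat \<times> nat) set" where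
  "arm_tails m M t = (SIGMA i:{..<m}. {M i<..M i + t i})"

lemma spider_verts_diff_arm_tails:
  "spider_verts m (\<lambda>i. M i + t i) - Some ` arm_tails m M t = spider_verts m M"
proof -
  have "(SIGMA i:{..<m}. {1..M i + t i}) - arm_tails m M t = (SIGMA i:{..<m}. {1..M i})"
    by (auto simp: arm_tails_def)
  then show ?thesis by (auto simp: spider_verts_def simp flip: image_set_diff)
qed

lemma arm_tails_subset: "Some ` arm_tails m M t \<subseteq> spider_verts m (\<lambda>i. M i + t i)"
  by (auto simp: spider_verts_def arm_tails_def)

lemma card_arm_tails: "card (arm_tails m M t) = (\<Sum>i<m. t i)"
  by (simp add: arm_tails_def card_SigmaI)

lemma card_spider_nbrs_first_of_empty_arm:
  assumes "M i = 0"
  shows "card {y\<in>spider_verts m M. spider_adj (Some (i, 1)) y} \<le> Suc (card {j\<in>{..<m}. 0 < M j})"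
proof -
  have "{y\<in>spider_verts m M. spider_adj (Some (i, 1)) y}
      \<subseteq> insert None ((\<lambda>j. Some (j, 1::nat)) ` {j\<in>{..<m}. 0 < M j})"
    using assms by (auto simp: spider_verts_def)
  then have "card {y\<in>spider_verts m M. spider_adj (Some (i, 1)) y}
      \<le> card (insert None ((\<lambda>j. Some (j, 1::nat)) ` {j\<in>{..<m}. 0 < M j}))"
    by (rule card_mono[rotated]) simp
  also have "\<dots> \<le> Suc (card ((\<lambda>j. Some (j, 1::nat)) ` {j\<in>{..<m}. 0 < M j}))"
    by (simp add: card_insert_if)
  also have "\<dots> \<le> Suc (card {j\<in>{..<m}. 0 < M j})" by (simp add: card_image_le)
  finally show ?thesis .
qed

lemma card_spider_nbrs_next:
  assumes "1 \<le> M i"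
  shows "card {y\<in>spider_verts m M. spider_adj (Some (i, Suc (M i))) y} \<le> 2"
proof -
  have "{y\<in>spider_verts m M. spider_adj (Some (i, Suc (M i))) y}
      \<subseteq> {Some (i, M i), if 2 \<le> M i then Some (i, M i - 1) else None}"
    using assms by (auto simp: spider_verts_def)
  then have "card {y\<in>spider_verts m M. spider_adj (Some (i, Suc (M i))) y}
      \<le> card {Some (i, M i), if 2 \<le> M i then Some (i, M i - 1) else None}"
    by (rule card_mono[rotated]) simp
  also have "\<dots> \<le> 2" by (simp add: card_insert_if)
  finally show ?thesis .
qed

lemma card_spider_nbrs_second_next:
  "card {y\<in>spider_verts m M. spider_adj (Some (i, M i + 2)) y} \<le> 1"
proof -
  have "{y\<in>spider_verts m M. spider_adj (Some (i, M i + 2)) y}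
      \<subseteq> {if M i = 0 then None else Some (i, M i)}"
    by (auto simp: spider_verts_def)
  then have "card {y\<in>spider_verts m M. spider_adj (Some (i, M i + 2)) y}
      \<le> card {if M i = 0 then None else Some (i, M i)}"
    by (rule card_mono[rotated]) simp
  then show ?thesis by simp
qed

lemma spider_nbrs_far:
  assumes "M i + 3 \<le> a"
  shows "{y\<in>spider_verts m M. spider_adj (Some (i, a)) y} = {}"
proof (rule equals0I)
  fix y assume "y \<in> {y\<in>spider_verts m M. spider_adj (Some (i, a)) y}"
  then show False using assms by (cases y) auto
qed

text \<open>Neighbours of the tail element (i, a) among the remaining elements: for a = M i + 1 at
  most two, or, if arm i is removed entirely, the centre and the first elements of the nonempty
  arms; for a = M i + 2 at most one; none beyond.\<close>
definition tail_degree_bound :: "nat \<Rightarrow> (nat \<Rightarrow> nat) \<Rightarrow> nat \<times> nat \<Rightarrow> nat" where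
  "tail_degree_bound m M p = (case p of (i, a) \<Rightarrow>
     if a = Suc (M i) then (if M i = 0 then Suc (card {j\<in>{..<m}. 0 < M j}) else 2)
     else if a = M i + 2 then 1 else 0)"

lemma card_spider_nbrs_le_tail_degree_bound:
  assumes "M i < a"
  shows "card {y\<in>spider_verts m M. spider_adj (Some (i, a)) y} \<le> tail_degree_bound m M (i, a)"
proof -
  consider "a = Suc (M i)" "M i = 0" | "a = Suc (M i)" "1 \<le> M i" | "a = M i + 2" | "M i + 3 \<le> a"
    using assms by linarith
  then show ?thesis
  proof cases
    case 1
    then show ?thesis using card_spider_nbrs_first_of_empty_arm[of M i m]
      by (simp add: tail_degree_bound_def)
  next
    case 2
    then show ?thesis using card_spider_nbrs_next[of M i m] by (simp add: tail_degree_bound_def)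
  next
    case 3
    then show ?thesis using card_spider_nbrs_second_next[of m M i] by (simp add: tail_degree_bound_def)
  next
    case 4
    then show ?thesis using spider_nbrs_far[of M i a m] by (simp add: tail_degree_bound_def)
  qed
qed

lemma card_tail_degree_bound_ge_1:
  assumes "g < m" "3 \<le> t g"
  shows "card {p\<in>arm_tails m M t. 1 \<le> tail_degree_bound m M p} < (\<Sum>i<m. t i)"
proof -
  have "{p\<in>arm_tails m M t. 1 \<le> tail_degree_bound m M p}
      \<subseteq> (SIGMA i:{..<m}. {M i<..min (M i + t i) (M i + 2)})"
    by (auto simp: arm_tails_def tail_degree_bound_def split: if_splits)
  then have "card {p\<in>arm_tails m M t. 1 \<le> tail_degree_bound m M p}
      \<le> card (SIGMA i:{..<m}. {M i<..min (M i + t i) (M i + 2)})"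
    by (rule card_mono[rotated]) simp
  also have "\<dots> = (\<Sum>i<m. card {M i<..min (M i + t i) (M i + 2)})" by (simp add: card_SigmaI)
  also have "\<dots> = (\<Sum>i<m. min (t i) 2)" by (rule sum.cong) (simp_all add: min_def)
  also have "\<dots> < (\<Sum>i<m. t i)"
    by (rule sum_strict_mono_ex1) (use assms in \<open>auto intro: bexI[of _ g]\<close>)
  finally show ?thesis .
qed

lemma card_tail_degree_bound_ge_2:
  assumes "g < m" "3 \<le> t g"
  shows "card {p\<in>arm_tails m M t. 2 \<le> tail_degree_bound m M p} + 2 \<le> (\<Sum>i<m. t i)"
proof -
  define P where "P = {i\<in>{..<m}. 0 < t i}"
  have "{p\<in>arm_tails m M t. 2 \<le> tail_degree_bound m M p} \<subseteq> (\<lambda>i. (i, Suc (M i))) ` P"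
    by (auto simp: arm_tails_def tail_degree_bound_def P_def split: if_splits)
  then have "card {p\<in>arm_tails m M t. 2 \<le> tail_degree_bound m M p} \<le> card ((\<lambda>i. (i, Suc (M i))) ` P)"
    by (rule card_mono[rotated]) (simp add: P_def)
  also have "\<dots> \<le> card P" by (rule card_image_le) (simp add: P_def)
  finally have "card {p\<in>arm_tails m M t. 2 \<le> tail_degree_bound m M p} \<le> card P" .
  moreover have "card P + 2 \<le> (\<Sum>i<m. t i)"
  proof -
    have "card P = (\<Sum>i<m. if 0 < t i then 1 else 0)"
      unfolding P_def by (simp add: sum.inter_filter[symmetric])
    moreover have "(\<Sum>i<m. if i = g then 2 else 0) = (2::nat)" using assms(1) by simp
    moreover have "(\<Sum>i<m. (if 0 < t i then 1 else 0) + (if i = g then 2 else 0)) \<le> (\<Sum>i<m. t i)"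
      by (rule sum_mono) (use assms(2) in auto)
    ultimately show ?thesis by (simp add: sum.distrib)
  qed
  ultimately show ?thesis by linarith
qed

lemma card_tail_degree_bound_ge_3:
  assumes "3 \<le> v"
  shows "card {p\<in>arm_tails m M t. v \<le> tail_degree_bound m M p} \<le> Suc m - v"
proof (cases "v \<le> Suc (card {j\<in>{..<m}. 0 < M j})")
  case True
  define F where "F = {i\<in>{..<m}. M i = 0}"
  have "{p\<in>arm_tails m M t. v \<le> tail_degree_bound m M p} \<subseteq> (\<lambda>i. (i, 1)) ` F"
    using assms by (auto simp: arm_tails_def tail_degree_bound_def F_def split: if_splits)
  then have "card {p\<in>arm_tails m M t. v \<le> tail_degree_bound m M p} \<le> card ((\<lambda>i. (i, 1::nat)) ` F)"
    by (rule card_mono[rotated]) (simp add: F_def)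
  also have "\<dots> \<le> card F" by (rule card_image_le) (simp add: F_def)
  finally have "card {p\<in>arm_tails m M t. v \<le> tail_degree_bound m M p} \<le> card F" .
  moreover have "card F + card {j\<in>{..<m}. 0 < M j} = m"
  proof -
    have "F \<union> {j\<in>{..<m}. 0 < M j} = {..<m}" "F \<inter> {j\<in>{..<m}. 0 < M j} = {}"
      by (auto simp: F_def)
    then show ?thesis using card_Un_disjoint[of F "{j\<in>{..<m}. 0 < M j}"] by (simp add: F_def)
  qed
  ultimately show ?thesis using True by linarith
next
  case False
  then have "{p\<in>arm_tails m M t. v \<le> tail_degree_bound m M p} = {}"
    using assms by (auto simp: tail_degree_bound_def split: if_splits)
  then show ?thesis by (metis card.empty zero_le)
qed

lemma kk_condition_arm_tails:
  assumes "m + 1 \<le> k" "(\<Sum>i<m. t i) = k" "g < m" "3 \<le> t g"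
  shows "kk_condition (arm_tails m M t) (tail_degree_bound m M) k"
  unfolding kk_condition_def
proof (intro allI impI)
  fix v :: nat assume "1 \<le> v"
  then consider "v = 1" | "v = 2" | "3 \<le> v" by linarith
  then show "card {p\<in>arm_tails m M t. v \<le> tail_degree_bound m M p} \<le> k - v"
  proof cases
    case 1
    then show ?thesis using card_tail_degree_bound_ge_1[of g m t M] assms by simp
  next
    case 2
    then show ?thesis using card_tail_degree_bound_ge_2[of g m t M] assms by simp
  next
    case 3
    then show ?thesis using card_tail_degree_bound_ge_3[of v m M t] assms(1) by simp
  qed
qed

lemma equitably_choosable_spider_add_tails:
  assumes rest: "equitably_choosable (spider_verts m M) spider_adj k"
    and "m + 1 \<le> k" "(\<Sum>i<m. t i) = k" "g < m" "3 \<le> t g"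
  shows "equitably_choosable (spider_verts m (\<lambda>i. M i + t i)) spider_adj k"
proof (rule equitably_choosable_by_removal[OF finite_spider_verts symp_spider_adj irreflp_spider_adj])
  let ?d = "case_option 0 (tail_degree_bound m M)"
  show "Some ` arm_tails m M t \<subseteq> spider_verts m (\<lambda>i. M i + t i)" by (rule arm_tails_subset)
  show "card (Some ` arm_tails m M t) = k"
    using assms(3) by (simp add: card_image card_arm_tails)
  show "equitably_choosable (spider_verts m (\<lambda>i. M i + t i) - Some ` arm_tails m M t) spider_adj k"
    using rest by (simp only: spider_verts_diff_arm_tails)
  show "\<forall>x\<in>Some ` arm_tails m M t.
      card {y\<in>spider_verts m (\<lambda>i. M i + t i) - Some ` arm_tails m M t. spider_adj x y} \<le> ?d x"
  proof
    fix x assume "x \<in> Some ` arm_tails m M t"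
    then obtain i a where "x = Some (i, a)" "M i < a" by (auto simp: arm_tails_def)
    then show "card {y\<in>spider_verts m (\<lambda>i. M i + t i) - Some ` arm_tails m M t. spider_adj x y} \<le> ?d x"
      unfolding spider_verts_diff_arm_tails using card_spider_nbrs_le_tail_degree_bound by simp
  qed
  show "kk_condition (Some ` arm_tails m M t) ?d k"
  proof (rule kk_condition_image)
    show "inj_on Some (arm_tails m M t)" by simp
    show "kk_condition (arm_tails m M t) (\<lambda>x. ?d (Some x)) k"
      using kk_condition_arm_tails[OF assms(2-5)] by simp
  qed
  show "1 \<le> k" using assms(2) by simp
qed

definition arm_layer :: "nat \<Rightarrow> nat set \<Rightarrow> (nat \<times> nat) option set" where
  "arm_layer a X = (\<lambda>i. Some (i, a)) ` X"

lemma card_arm_layer [simp]: "card (arm_layer a X) = card X"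
  by (simp add: arm_layer_def card_image inj_on_def)

lemma finite_arm_layer [simp]: "finite X \<Longrightarrow> finite (arm_layer a X)"
  by (simp add: arm_layer_def)

lemma None_notin_arm_layer [simp]: "None \<notin> arm_layer a X"
  by (auto simp: arm_layer_def)

lemma card_insert_None_arm_layers:
  assumes "finite X" "finite Y"
  shows "card (insert None (arm_layer 1 X \<union> arm_layer 2 Y)) = Suc (card X + card Y)"
proof -
  have "arm_layer 1 X \<inter> arm_layer 2 Y = {}"
    using assms by (auto simp: arm_layer_def)
  then show ?thesis using card_Un_disjoint[of "arm_layer 1 X" "arm_layer 2 Y"] assms by simp
qed

lemma spider_verts_short_arms:
  assumes "\<forall>i<m. L i \<le> 2"
  shows "spider_verts m L = insert None (arm_layer 1 {i\<in>{..<m}. 1 \<le> L i} \<union> arm_layer 2 {i\<in>{..<m}. L i = 2})"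
  using assms by (auto simp: spider_verts_def arm_layer_def image_iff le_Suc_eq numeral_2_eq_2)

lemma card_spider_nbrs_in_second_layer:
  assumes "1 \<le> a" "a \<le> 2"
  shows "card {y\<in>arm_layer 2 R. spider_adj (Some (i, a)) y} \<le> (if a = 1 \<and> i \<in> R then 1 else 0)"
proof (cases "a = 1 \<and> i \<in> R")
  case True
  have "{y\<in>arm_layer 2 R. spider_adj (Some (i, a)) y} \<subseteq> {Some (i, 2)}"
    using assms by (auto simp: arm_layer_def)
  then have "card {y\<in>arm_layer 2 R. spider_adj (Some (i, a)) y} \<le> card {Some (i, 2::nat)}"
    by (rule card_mono[rotated]) simp
  then show ?thesis using True by simp
next
  case False
  have "{y\<in>arm_layer 2 R. spider_adj (Some (i, a)) y} = {}"
  proof (rule equals0I)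
    fix y assume "y \<in> {y\<in>arm_layer 2 R. spider_adj (Some (i, a)) y}"
    then show False using assms False by (auto simp: arm_layer_def)
  qed
  then show ?thesis by (metis card.empty zero_le)
qed

text \<open>Only the centre and the first elements below an uncoloured second element have
  neighbours outside S, and the centre is the only one with more than one.\<close>
lemma equitably_choosable_spider_rest_in_second_layer:
  assumes S: "S \<subseteq> spider_verts m L" "card S = k" "None \<in> S"
    and S_low: "\<forall>x\<in>S - {None}. \<exists>i a. x = Some (i, a) \<and> 1 \<le> a \<and> a \<le> 2"
    and rest: "spider_verts m L - S = arm_layer 2 R" and R: "finite R" "card R \<le> k - 2"
    and k: "3 \<le> k"
  shows "equitably_choosable (spider_verts m L) spider_adj k"
proof -
  define d where "d x = (case x of None \<Rightarrow> card R | Some (i, a) \<Rightarrow> if a = 1 \<and> i \<in> R then 1 else 0)"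
    for x :: "(nat \<times> nat) option"
  have deg: "\<forall>x\<in>S. card {y\<in>spider_verts m L - S. spider_adj x y} \<le> d x"
    unfolding rest
  proof
    fix x assume "x \<in> S"
    then consider "x = None" | i a where "x = Some (i, a)" "1 \<le> a" "a \<le> 2" using S_low by blast
    then show "card {y\<in>arm_layer 2 R. spider_adj x y} \<le> d x"
    proof cases
      case 1
      have "card {y\<in>arm_layer 2 R. spider_adj x y} \<le> card (arm_layer 2 R)"
        by (rule card_mono) (auto simp: arm_layer_def R(1))
      then show ?thesis using 1 by (simp add: d_def)
    next
      case (2 i a)
      then show ?thesis using card_spider_nbrs_in_second_layer[where a = a and i = i and R = R]
        by (simp add: d_def)
    qed
  qed
  have cond: "kk_condition S d k"
  proof (rule kk_condition_single_hub)
    show "finite S" using finite_subset[OF S(1)] by simp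
    show "None \<in> S" "d None < k" using S(3) R(2) k by (auto simp: d_def)
    show "\<forall>x\<in>S - {None}. d x \<le> 2" by (auto simp: d_def split: option.splits)
    have "{x\<in>S. 1 \<le> d x} \<subseteq> insert None (arm_layer 1 R)"
    proof
      fix x assume "x \<in> {x\<in>S. 1 \<le> d x}"
      then show "x \<in> insert None (arm_layer 1 R)"
        by (cases x) (auto simp: d_def arm_layer_def split: if_splits)
    qed
    then have "card {x\<in>S. 1 \<le> d x} \<le> card (insert None (arm_layer 1 R))"
      by (rule card_mono[rotated]) (simp add: R(1))
    then show "card {x\<in>S. 1 \<le> d x} \<le> k - 1" using R k by simp
    have "{x\<in>S. 2 \<le> d x} \<subseteq> {None}"
    proof
      fix x assume "x \<in> {x\<in>S. 2 \<le> d x}"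
      then show "x \<in> {None}" by (cases x) (auto simp: d_def split: if_splits)
    qed
    then show "card {x\<in>S. 2 \<le> d x} \<le> k - 2"
      using card_mono[of "{None}" "{x\<in>S. 2 \<le> d x}"] k by simp
  qed
  have "equitably_choosable (spider_verts m L - S) spider_adj k"
    unfolding rest by (rule equitably_choosable_if_card_le) (use R in \<open>simp_all add: irreflp_spider_adj\<close>)
  moreover have "1 \<le> k" using k by simp
  ultimately show ?thesis
    using equitably_choosable_by_removal[OF finite_spider_verts symp_spider_adj irreflp_spider_adj
        S(1,2) _ _ deg cond]
    by blast
qed

text \<open>The centre, all first elements and enough second elements form the block coloured last.\<close>
lemma equitably_choosable_spider_short_arms:
  assumes k: "m + 1 \<le> k" and short: "\<forall>i<m. L i \<le> 2"
    and big: "k < card (spider_verts m L)" and small: "card (spider_verts m L) \<le> 2 * k - 2"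
  shows "equitably_choosable (spider_verts m L) spider_adj k"
proof -
  define A1 where "A1 = {i\<in>{..<m}. 1 \<le> L i}"
  define A2 where "A2 = {i\<in>{..<m}. L i = 2}"
  have W: "spider_verts m L = insert None (arm_layer 1 A1 \<union> arm_layer 2 A2)"
    unfolding A1_def A2_def using short by (rule spider_verts_short_arms)
  have "card (spider_verts m L) = Suc (card A1 + card A2)"
    unfolding W by (rule card_insert_None_arm_layers) (simp_all add: A1_def A2_def)
  moreover have "card A1 \<le> m" using card_mono[of "{..<m}" A1] by (auto simp: A1_def)
  ultimately have "k - 1 - card A1 \<le> card A2" using big k by simp
  then obtain Q where Q: "Q \<subseteq> A2" "card Q = k - 1 - card A1"
    by (meson obtain_subset_with_card_n)
  define S where "S = insert None (arm_layer 1 A1 \<union> arm_layer 2 Q)"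
  have finQ: "finite Q" using Q(1) finite_subset by (fastforce simp: A2_def)
  have S: "S \<subseteq> spider_verts m L" "card S = k"
    using Q \<open>card A1 \<le> m\<close> k finQ card_insert_None_arm_layers[of A1 Q]
    by (auto simp: S_def W arm_layer_def A1_def)
  have rest: "spider_verts m L - S = arm_layer 2 (A2 - Q)"
    using Q(1) by (auto simp: W S_def arm_layer_def)
  then have "card (A2 - Q) \<le> k - 2"
    using small S card_Diff_subset[OF finite_subset[OF S(1)] S(1)] by simp
  moreover have "\<forall>x\<in>S - {None}. \<exists>i a. x = Some (i, a) \<and> 1 \<le> a \<and> a \<le> 2"
    by (auto simp: S_def arm_layer_def)
  ultimately show ?thesis
    using equitably_choosable_spider_rest_in_second_layer[OF S _ _ rest] big small
    by (simp add: S_def A2_def)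
qed

text \<open>Here the 2k - 1 elements leave too many outside a block of the previous kind; instead the
  centre, one whole arm and the first elements of all but one further arm are coloured last.\<close>
lemma equitably_choosable_spider_arms_two:
  assumes k: "m + 1 = k" and m: "2 \<le> m"
  shows "equitably_choosable (spider_verts m (\<lambda>_. 2)) spider_adj k"
proof -
  define W where "W = spider_verts m (\<lambda>_. 2)"
  define S where "S = {None, Some (0, 1), Some (0, 2)} \<union> (\<lambda>j. Some (j, 1::nat)) ` {1..<m - 1}"
  define d where "d x = (case x of None \<Rightarrow> k - 1 | Some (i, a) \<Rightarrow> if a = 2 then 0 else if i = 0 then 1 else 2)"
    for x :: "(nat \<times> nat) option"
  have rest: "W - S = insert (Some (m - 1, 1)) ((\<lambda>j. Some (j, 2)) ` {1..<m})"
    using m by (auto simp: W_def S_def spider_verts_def image_iff numeral_2_eq_2 le_Suc_eq)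
  have S: "S \<subseteq> W" "card S = k"
  proof -
    show "S \<subseteq> W" using m by (auto simp: W_def S_def)
    have "card ((\<lambda>j. Some (j, 1::nat)) ` {1..<m - 1}) = m - 2" by (simp add: card_image inj_on_def)
    then show "card S = k" using k m by (subst S_def, subst card_Un_disjoint) auto
  qed
  have card_rest: "card (W - S) = k - 1"
    unfolding rest using k m by (subst card_insert_disjoint) (auto simp: card_image inj_on_def)
  have deg: "card {y\<in>W - S. spider_adj x y} \<le> d x" if "x \<in> S" for x
  proof (cases x)
    case None
    have "card {y\<in>W - S. spider_adj x y} \<le> card (W - S)" by (rule card_mono) (auto simp: W_def)
    then show ?thesis using None card_rest by (simp add: d_def)
  next
    case (Some p)
    obtain i a where x: "x = Some (i, a)" using Some by (cases p) auto
    define B where "B = (if a = 2 then {} else if i = 0 then {Some (m - 1, 1)}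
      else {Some (i, 2), Some (m - 1, 1::nat)})"
    have "{y\<in>W - S. spider_adj x y} \<subseteq> B"
      unfolding rest B_def using that m by (auto simp: x S_def)
    then have "card {y\<in>W - S. spider_adj x y} \<le> card B" by (rule card_mono[rotated]) (simp add: B_def)
    also have "\<dots> \<le> d x" by (simp add: B_def x d_def card_insert_if)
    finally show ?thesis .
  qed
  have "kk_condition S d k"
  proof (rule kk_condition_single_hub)
    show "finite S" "None \<in> S" "d None < k" using k by (auto simp: S_def d_def)
    show "\<forall>x\<in>S - {None}. d x \<le> 2" by (auto simp: d_def split: option.splits)
    have "{x\<in>S. 1 \<le> d x} \<subseteq> S - {Some (0, 2)}" by (auto simp: d_def)
    then show "card {x\<in>S. 1 \<le> d x} \<le> k - 1"
      using card_mono[of "S - {Some (0, 2)}" "{x\<in>S. 1 \<le> d x}"] S(2) by (simp add: S_def)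
    have "{x\<in>S. 2 \<le> d x} \<subseteq> S - {Some (0, 1), Some (0, 2)}" by (auto simp: d_def)
    then show "card {x\<in>S. 2 \<le> d x} \<le> k - 2"
      using card_mono[of "S - {Some (0, 1), Some (0, 2)}" "{x\<in>S. 2 \<le> d x}"] S(2)
      by (simp add: S_def card_Diff_subset)
  qed
  moreover have "equitably_choosable (W - S) spider_adj k"
    by (rule equitably_choosable_if_card_le) (use card_rest in \<open>simp_all add: irreflp_spider_adj W_def\<close>)
  moreover have "1 \<le> k" using k by simp
  ultimately show ?thesis
    using equitably_choosable_by_removal[OF finite_spider_verts symp_spider_adj irreflp_spider_adj S[unfolded W_def]]
      deg unfolding W_def by blast
qed

lemma exists_bounded_summands:
  fixes L :: "nat \<Rightarrow> nat"
  assumes "s \<le> (\<Sum>i<n. L i)"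
  shows "\<exists>t. (\<forall>i. t i \<le> L i) \<and> (\<Sum>i<n. t i) = s"
  using assms
proof (induction n arbitrary: s)
  case 0
  then show ?case by (intro exI[of _ "\<lambda>_. 0"]) simp
next
  case (Suc n)
  show ?case
  proof (cases "s \<le> (\<Sum>i<n. L i)")
    case True
    then obtain t where t: "\<forall>i. t i \<le> L i" "(\<Sum>i<n. t i) = s" using Suc.IH by blast
    then show ?thesis by (intro exI[of _ "t(n := 0)"]) simp
  next
    case False
    define t where "t i = (if i < n then L i else if i = n then s - (\<Sum>i<n. L i) else 0)" for i
    have "(\<Sum>i<n. t i) = (\<Sum>i<n. L i)" by (simp add: t_def)
    then show ?thesis using False Suc.prems by (intro exI[of _ t]) (auto simp: t_def)
  qed
qed

lemma exists_tail_lengths: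
  fixes L :: "nat \<Rightarrow> nat"
  assumes "g < m" "3 \<le> L g" "3 \<le> k" "k \<le> (\<Sum>i<m. L i)"
  shows "\<exists>t. (\<forall>i. t i \<le> L i) \<and> (\<Sum>i<m. t i) = k \<and> 3 \<le> t g"
proof -
  define tg where "tg = min (L g) k"
  have sum_split: "(\<Sum>i<m. f i) = f g + (\<Sum>i\<in>{..<m} - {g}. f i)" for f :: "nat \<Rightarrow> nat"
    using assms(1) by (simp add: sum.remove)
  have upd: "(\<Sum>i\<in>{..<m} - {g}. (f(g := x)) i) = (\<Sum>i\<in>{..<m} - {g}. f i)" for f :: "nat \<Rightarrow> nat" and x
    by (rule sum.cong) auto
  have "(\<Sum>i<m. L i) = L g + (\<Sum>i<m. (L(g := 0)) i)"
    using sum_split[of L] sum_split[of "L(g := 0)"] upd[of L] by simp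
  then have "k - tg \<le> (\<Sum>i<m. (L(g := 0)) i)" using assms(4) by (simp add: tg_def)
  then obtain t0 where t0: "\<forall>i. t0 i \<le> (L(g := 0)) i" "(\<Sum>i<m. t0 i) = k - tg"
    using exists_bounded_summands by blast
  have "t0 g = 0" using t0(1) by (metis fun_upd_same le_zero_eq)
  then have "(\<Sum>i<m. (t0(g := tg)) i) = tg + (\<Sum>i<m. t0 i)"
    using sum_split[of t0] sum_split[of "t0(g := tg)"] upd[of t0] by simp
  moreover have "\<forall>i. (t0(g := tg)) i \<le> L i"
    using t0(1) by (auto simp: tg_def split: if_splits)
  ultimately show ?thesis
    using t0(2) assms(2,3) by (intro exI[of _ "t0(g := tg)"]) (auto simp: tg_def)
qed

lemma spider_arms_eq_two:
  assumes "\<forall>i<m. L i \<le> 2" "2 * m \<le> (\<Sum>i<m. L i)"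
  shows "spider_verts m L = spider_verts m (\<lambda>_. 2)"
proof -
  have "\<forall>i<m. L i = 2"
  proof (rule ccontr)
    assume "\<not> (\<forall>i<m. L i = 2)"
    then obtain j where "j < m" "L j < 2" using assms(1) by (meson le_neq_implies_less)
    then have "(\<Sum>i<m. L i) < (\<Sum>i<m. 2)"
      using assms(1) by (intro sum_strict_mono_ex1) auto
    then show False using assms(2) by simp
  qed
  then show ?thesis by (auto simp: spider_verts_def)
qed

lemma equitably_choosable_spider:
  assumes k: "3 \<le> k" "m + 1 \<le> k"
  shows "equitably_choosable (spider_verts m L) spider_adj k"
proof (induction "\<Sum>i<m. L i" arbitrary: L rule: less_induct)
  case less
  have "(\<exists>g<m. 3 \<le> L g) \<or> (\<forall>i<m. L i \<le> 2)" by force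
  then consider (few) "card (spider_verts m L) \<le> k"
    | (long) g where "g < m" "3 \<le> L g" "k < card (spider_verts m L)"
    | (short) "\<forall>i<m. L i \<le> 2" "k < card (spider_verts m L)" "card (spider_verts m L) \<le> 2 * k - 2"
    | (two) "\<forall>i<m. L i \<le> 2" "2 * k - 2 < card (spider_verts m L)"
    by (meson not_le)
  then show ?case
  proof cases
    case few
    then show ?thesis by (simp add: equitably_choosable_if_card_le irreflp_spider_adj)
  next
    case (long g)
    then have "k \<le> (\<Sum>i<m. L i)" by (simp add: card_spider_verts)
    then obtain t where t: "\<forall>i. t i \<le> L i" "(\<Sum>i<m. t i) = k" "3 \<le> t g"
      using exists_tail_lengths[of g m L k] long(1,2) k(1) by blast
    define M where "M i = L i - t i" for i
    have L: "L = (\<lambda>i. M i + t i)" using t(1) by (auto simp: M_def)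
    have "(\<Sum>i<m. M i) < (\<Sum>i<m. L i)"
      unfolding L using t(2) k(1) by (simp add: sum.distrib)
    then have "equitably_choosable (spider_verts m M) spider_adj k" by (rule less.hyps)
    then show ?thesis
      unfolding L by (rule equitably_choosable_spider_add_tails[OF _ k(2) t(2) long(1) t(3)])
  next
    case short
    then show ?thesis by (rule equitably_choosable_spider_short_arms[OF k(2)])
  next
    case two
    have "(\<Sum>i<m. L i) \<le> 2 * m"
      using sum_mono[of "{..<m}" L "\<lambda>_. 2"] two(1) by simp
    then have "m + 1 = k" "2 * m \<le> (\<Sum>i<m. L i)"
      using two(2) k by (simp_all add: card_spider_verts)
    then show ?thesis
      using spider_arms_eq_two[OF two(1)] equitably_choosable_spider_arms_two[of m k] k(1) by simp
  qed
qed

lemma symp_total_adj: "symp (total_adj F)"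
proof (rule sympI)
  show "total_adj F v u" if "total_adj F u v" for u v
    using that by (cases u; cases v) (auto simp: insert_commute)
qed

locale star_paths =
  fixes m :: nat and c :: 'a and P :: "nat \<Rightarrow> 'a list" and V :: "'a set" and E :: "'a set set"
  assumes paths: "\<forall>i<m. distinct (P i) \<and> length (P i) \<ge> 2 \<and> hd (P i) = c"
    and meet_at_centre: "\<forall>i<m. \<forall>j<m. i \<noteq> j \<longrightarrow> set (P i) \<inter> set (P j) = {c}"
    and V_eq: "V = insert c (\<Union>i<m. set (P i))"
    and E_eq: "E = (\<Union>i<m. path_edges (P i))"
begin

definition arm_length :: "nat \<Rightarrow> nat" where
  "arm_length i = 2 * (length (P i) - 1)"

fun total_elem :: "(nat \<times> nat) option \<Rightarrow> 'a + 'a set" where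
  "total_elem None = Inl c"
| "total_elem (Some (i, a)) =
     (if even a then Inl (P i ! (a div 2)) else Inr {P i ! (a div 2), P i ! Suc (a div 2)})"

lemma total_elem_vertex: "total_elem (Some (i, 2 * q)) = Inl (P i ! q)"
  by simp

lemma total_elem_edge: "total_elem (Some (i, 2 * q + 1)) = Inr {P i ! q, P i ! Suc q}"
  by simp

lemma length_ge_2: "i < m \<Longrightarrow> 2 \<le> length (P i)"
  using paths by blast

lemma nth_0_eq_centre: "i < m \<Longrightarrow> P i ! 0 = c"
  using paths length_ge_2 by (metis hd_conv_nth list.size(3) not_numeral_le_zero)

lemma nth_eq_nth_iff_same_arm:
  "i < m \<Longrightarrow> \<alpha> < length (P i) \<Longrightarrow> \<beta> < length (P i) \<Longrightarrow> P i ! \<alpha> = P i ! \<beta> \<longleftrightarrow> \<alpha> = \<beta>"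
  using paths nth_eq_iff_index_eq by metis

lemma nth_eq_centre_iff: "i < m \<Longrightarrow> \<alpha> < length (P i) \<Longrightarrow> P i ! \<alpha> = c \<longleftrightarrow> \<alpha> = 0"
  using nth_eq_nth_iff_same_arm[of i \<alpha> 0] nth_0_eq_centre length_ge_2 by fastforce

lemma nth_eq_nth_imp:
  assumes "i < m" "j < m" "\<alpha> < length (P i)" "\<beta> < length (P j)" "P i ! \<alpha> = P j ! \<beta>"
  shows "(\<alpha> = 0 \<and> \<beta> = 0) \<or> (i = j \<and> \<alpha> = \<beta>)"
proof (cases "i = j")
  case True
  then show ?thesis using assms nth_eq_nth_iff_same_arm by blast
next
  case False
  then have "P i ! \<alpha> = c" using assms meet_at_centre by (metis IntI nth_mem singletonD)
  then show ?thesis using assms nth_eq_centre_iff by metis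
qed

lemma nth_eq_nth_imp_inner:
  assumes "i < m" "j < m" "\<alpha> < length (P i)" "\<beta> < length (P j)" "P i ! \<alpha> = P j ! \<beta>" "1 \<le> \<alpha>"
  shows "i = j \<and> \<alpha> = \<beta>"
  using nth_eq_nth_imp[OF assms(1-5)] assms(6) by auto

lemma mem_E_iff: "e \<in> E \<longleftrightarrow> (\<exists>j<m. \<exists>r. Suc r < length (P j) \<and> e = {P j ! r, P j ! Suc r})"
  by (auto simp: E_eq path_edges_def)

lemma spider_verts_arm_length_cases:
  assumes "x \<in> spider_verts m arm_length"
  obtains (centre) "x = None"
    | (vertex) i q where "i < m" "1 \<le> q" "q < length (P i)" "x = Some (i, 2 * q)"
    | (edge) i q where "i < m" "Suc q < length (P i)" "x = Some (i, 2 * q + 1)"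
proof (cases x)
  case (Some p)
  then obtain i a where x: "x = Some (i, a)" by (cases p) auto
  then have a: "i < m" "1 \<le> a" "a \<le> 2 * (length (P i) - 1)"
    using assms by (auto simp: arm_length_def)
  show ?thesis
  proof (cases "even a")
    case True
    then obtain q where "a = 2 * q" by blast
    then show ?thesis using vertex[of i q] a x length_ge_2[of i] by auto
  next
    case False
    then obtain q where "a = 2 * q + 1" using oddE by blast
    then show ?thesis using edge[of i q] a x length_ge_2[of i] by auto
  qed
qed (rule centre)

lemma not_total_adj_centre_centre: "\<not> total_adj E (Inl c) (Inl c)"
proof
  assume "total_adj E (Inl c) (Inl c)"
  then obtain j r where jr: "j < m" "Suc r < length (P j)" "{c} = {P j ! r, P j ! Suc r}"
    by (auto simp: mem_E_iff)
  then have "P j ! r \<in> {c}" "P j ! Suc r \<in> {c}" by auto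
  then have "P j ! r = P j ! Suc r" by simp
  then show False using nth_eq_nth_iff_same_arm[of j r "Suc r"] jr(1,2) by simp
qed

lemma total_adj_centre_vertex:
  assumes "i < m" "1 \<le> q" "q < length (P i)" "total_adj E (Inl c) (Inl (P i ! q))"
  shows "spider_adj None (Some (i, 2 * q))"
proof -
  obtain j r where jr: "j < m" "Suc r < length (P j)" "{c, P i ! q} = {P j ! r, P j ! Suc r}"
    using assms(4) by (auto simp: mem_E_iff)
  have "P j ! Suc r \<noteq> c" using jr nth_eq_centre_iff by blast
  then have "c = P j ! r" "P i ! q = P j ! Suc r" using jr(3) by (auto simp: doubleton_eq_iff)
  then have "r = 0" "q = Suc r" using jr assms nth_eq_centre_iff nth_eq_nth_imp_inner[of i j q "Suc r"]
    by (auto dest: Suc_lessD)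
  then show ?thesis by simp
qed

lemma total_adj_centre_edge:
  assumes "i < m" "Suc q < length (P i)" "total_adj E (Inl c) (Inr {P i ! q, P i ! Suc q})"
  shows "spider_adj None (Some (i, 2 * q + 1))"
proof -
  have "c = P i ! q \<or> c = P i ! Suc q" using assms(3) by simp
  then have "q = 0" using assms(1,2) nth_eq_centre_iff by (metis Suc_lessD nat.distinct(1))
  then show ?thesis by simp
qed

lemma total_adj_vertex_vertex:
  assumes "i < m" "1 \<le> q" "q < length (P i)" "j < m" "1 \<le> r" "r < length (P j)"
    "total_adj E (Inl (P i ! q)) (Inl (P j ! r))"
  shows "spider_adj (Some (i, 2 * q)) (Some (j, 2 * r))"
proof -
  obtain l s where ls: "l < m" "Suc s < length (P l)" "{P i ! q, P j ! r} = {P l ! s, P l ! Suc s}"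
    using assms(7) by (auto simp: mem_E_iff)
  then have "(P i ! q = P l ! s \<and> P j ! r = P l ! Suc s) \<or> (P i ! q = P l ! Suc s \<and> P j ! r = P l ! s)"
    by (simp add: doubleton_eq_iff)
  then have "i = j \<and> (r = Suc q \<or> q = Suc r)"
    using nth_eq_nth_imp_inner[of i l q] nth_eq_nth_imp_inner[of j l r] assms ls
    by (metis Suc_lessD)
  then show ?thesis by auto
qed

lemma total_adj_vertex_edge:
  assumes "i < m" "1 \<le> q" "q < length (P i)" "j < m" "Suc r < length (P j)"
    "total_adj E (Inl (P i ! q)) (Inr {P j ! r, P j ! Suc r})"
  shows "spider_adj (Some (i, 2 * q)) (Some (j, 2 * r + 1))"
proof -
  have "P i ! q = P j ! r \<or> P i ! q = P j ! Suc r" using assms(6) by simp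
  then have "i = j \<and> (q = r \<or> q = Suc r)"
    using nth_eq_nth_imp_inner[of i j q] assms by (metis Suc_lessD)
  then show ?thesis by auto
qed

lemma total_adj_edge_edge:
  assumes "i < m" "Suc q < length (P i)" "j < m" "Suc r < length (P j)"
    "total_adj E (Inr {P i ! q, P i ! Suc q}) (Inr {P j ! r, P j ! Suc r})"
  shows "spider_adj (Some (i, 2 * q + 1)) (Some (j, 2 * r + 1))"
proof -
  have ne: "{P i ! q, P i ! Suc q} \<noteq> {P j ! r, P j ! Suc r}"
    and "{P i ! q, P i ! Suc q} \<inter> {P j ! r, P j ! Suc r} \<noteq> {}" using assms(5) by auto
  then obtain \<alpha> \<beta> where ab: "\<alpha> = q \<or> \<alpha> = Suc q" "\<beta> = r \<or> \<beta> = Suc r" "P i ! \<alpha> = P j ! \<beta>"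
    by blast
  then have "\<alpha> < length (P i)" "\<beta> < length (P j)" using assms by auto
  then have "(\<alpha> = 0 \<and> \<beta> = 0) \<or> (i = j \<and> \<alpha> = \<beta>)"
    using nth_eq_nth_imp[OF assms(1,3)] ab(3) by blast
  then have "(i \<noteq> j \<and> q = 0 \<and> r = 0) \<or> (i = j \<and> q \<noteq> r \<and> q \<le> Suc r \<and> r \<le> Suc q)"
    using ab ne by auto
  then show ?thesis by auto
qed

lemma total_adj_imp_spider_adj:
  assumes x: "x \<in> spider_verts m arm_length" and y: "y \<in> spider_verts m arm_length"
    and adj: "total_adj E (total_elem x) (total_elem y)"
  shows "spider_adj x y"
proof -
  have adj': "total_adj E (total_elem y) (total_elem x)" using adj symp_total_adj by (metis sympD)
  have flip: "spider_adj y x \<Longrightarrow> spider_adj x y" using symp_spider_adj by (metis sympD)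
  from x show ?thesis
  proof (cases rule: spider_verts_arm_length_cases)
    case centre
    from y show ?thesis
    proof (cases rule: spider_verts_arm_length_cases)
      case centre
      then show ?thesis using adj \<open>x = None\<close> not_total_adj_centre_centre by simp
    next
      case (vertex j r)
      then show ?thesis using adj \<open>x = None\<close> total_adj_centre_vertex by simp
    next
      case (edge j r)
      then show ?thesis using adj \<open>x = None\<close> total_adj_centre_edge by simp
    qed
  next
    case x_vertex: (vertex i q)
    from y show ?thesis
    proof (cases rule: spider_verts_arm_length_cases)
      case centre
      then show ?thesis using adj' x_vertex total_adj_centre_vertex flip by simp
    next
      case (vertex j r)
      then show ?thesis using adj x_vertex total_adj_vertex_vertex by simp
    next
      case (edge j r)
      then show ?thesis using adj x_vertex total_adj_vertex_edge by simp
    qed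
  next
    case x_edge: (edge i q)
    from y show ?thesis
    proof (cases rule: spider_verts_arm_length_cases)
      case centre
      then show ?thesis using adj' x_edge total_adj_centre_edge flip by simp
    next
      case (vertex j r)
      then show ?thesis using adj' x_edge total_adj_vertex_edge flip by simp
    next
      case (edge j r)
      then show ?thesis using adj x_edge total_adj_edge_edge by simp
    qed
  qed
qed

lemma edge_eq_edge_imp:
  assumes "i < m" "Suc q < length (P i)" "j < m" "Suc r < length (P j)"
    and eq: "{P i ! q, P i ! Suc q} = {P j ! r, P j ! Suc r}"
  shows "i = j \<and> q = r"
proof -
  have "(P i ! q = P j ! r \<and> P i ! Suc q = P j ! Suc r) \<or> (P i ! q = P j ! Suc r \<and> P i ! Suc q = P j ! r)"
    using eq by (simp add: doubleton_eq_iff)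
  then show ?thesis
  proof
    assume "P i ! q = P j ! r \<and> P i ! Suc q = P j ! Suc r"
    then show ?thesis using nth_eq_nth_imp_inner[of i j "Suc q" "Suc r"] assms(1-4) by simp
  next
    assume a: "P i ! q = P j ! Suc r \<and> P i ! Suc q = P j ! r"
    then have "i = j" "Suc q = r" using nth_eq_nth_imp_inner[of i j "Suc q" r] assms(1-4) by auto
    then show ?thesis using a nth_eq_nth_iff_same_arm[of i q "Suc r"] assms(1-4) by simp
  qed
qed

lemma inj_on_total_elem: "inj_on total_elem (spider_verts m arm_length)"
proof (rule inj_onI)
  fix x y
  assume x: "x \<in> spider_verts m arm_length" and y: "y \<in> spider_verts m arm_length"
    and eq: "total_elem x = total_elem y"
  from x show "x = y"
  proof (cases rule: spider_verts_arm_length_cases)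
    case centre
    from y show ?thesis
    proof (cases rule: spider_verts_arm_length_cases)
      case (vertex j r)
      then show ?thesis using eq \<open>x = None\<close> nth_eq_centre_iff by fastforce
    qed (use eq \<open>x = None\<close> in simp_all)
  next
    case x_vertex: (vertex i q)
    from y show ?thesis
    proof (cases rule: spider_verts_arm_length_cases)
      case centre
      then show ?thesis using eq x_vertex nth_eq_centre_iff by fastforce
    next
      case (vertex j r)
      then show ?thesis using eq x_vertex nth_eq_nth_imp_inner[of i j q r] by simp
    qed (use eq x_vertex in simp_all)
  next
    case x_edge: (edge i q)
    from y show ?thesis
    proof (cases rule: spider_verts_arm_length_cases)
      case (edge j r)
      then show ?thesis using eq x_edge edge_eq_edge_imp[of i q j r] by simp
    qed (use eq x_edge in simp_all)
  qed
qed

lemma total_elem_image_subset: "total_elem ` spider_verts m arm_length \<subseteq> total_vertices V E"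
proof
  fix z assume "z \<in> total_elem ` spider_verts m arm_length"
  then obtain x where x: "x \<in> spider_verts m arm_length" and z: "z = total_elem x" by blast
  from x show "z \<in> total_vertices V E"
  proof (cases rule: spider_verts_arm_length_cases)
    case (vertex i q)
    then have "P i ! q \<in> V" unfolding V_eq using nth_mem by blast
    then show ?thesis using z vertex by (simp add: total_vertices_def)
  next
    case (edge i q)
    then have "{P i ! q, P i ! Suc q} \<in> E" unfolding mem_E_iff by blast
    then show ?thesis using z edge by (simp add: total_vertices_def)
  next
    case centre
    then show ?thesis using z by (simp add: total_vertices_def V_eq)
  qed
qed

lemma total_vertices_subset_total_elem_image:
  "total_vertices V E \<subseteq> total_elem ` spider_verts m arm_length"
proof
  fix z assume "z \<in> total_vertices V E"
  then consider (vertex) v where "z = Inl v" "v \<in> V" | (edge) e where "z = Inr e" "e \<in> E"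
    unfolding total_vertices_def by blast
  then show "z \<in> total_elem ` spider_verts m arm_length"
  proof cases
    case (vertex v)
    show ?thesis
    proof (cases "v = c")
      case True
      then show ?thesis using vertex by (metis None_mem_spider_verts image_eqI total_elem.simps(1))
    next
      case False
      then obtain i q where "i < m" "q < length (P i)" "v = P i ! q"
        using vertex by (auto simp: V_eq in_set_conv_nth)
      moreover have "q \<noteq> 0" using False calculation nth_0_eq_centre by metis
      ultimately have "Some (i, 2 * q) \<in> spider_verts m arm_length" "z = total_elem (Some (i, 2 * q))"
        using vertex by (auto simp: arm_length_def total_elem_vertex simp del: total_elem.simps)
      then show ?thesis by blast
    qed
  next
    case (edge e)
    then obtain j r where jr: "j < m" "Suc r < length (P j)" "e = {P j ! r, P j ! Suc r}"
      by (auto simp: mem_E_iff)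
    then have "Some (j, 2 * r + 1) \<in> spider_verts m arm_length" by (simp add: arm_length_def)
    moreover have "z = total_elem (Some (j, 2 * r + 1))" unfolding total_elem_edge using edge jr by simp
    ultimately show ?thesis by blast
  qed
qed

lemma equitably_choosable_total_graph:
  assumes "3 \<le> k" "m + 1 \<le> k"
  shows "equitably_choosable (total_vertices V E) (total_adj E) k"
proof (rule equitably_choosable_transfer[OF equitably_choosable_spider[OF assms]])
  show "bij_betw total_elem (spider_verts m arm_length) (total_vertices V E)"
    using inj_on_total_elem total_elem_image_subset total_vertices_subset_total_elem_image
    by (simp add: bij_betw_def)
qed (use total_adj_imp_spider_adj in auto)

end

theorem theorem1p5:
  fixes V :: "'a set" and E :: "'a set set" and m :: nat
  assumes "star_subdivision V E m"
  shows "(m = 1 \<longrightarrow> (\<forall>k\<ge>3. equitably_choosable (total_vertices V E) (total_adj E) k))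
       \<and> (m \<ge> 2 \<longrightarrow> (\<forall>k\<ge>m+1. equitably_choosable (total_vertices V E) (total_adj E) k))"
proof -
  obtain c P where paths: "star_paths m c P V E"
    using assms unfolding star_subdivision_def star_paths_def by blast
  have "equitably_choosable (total_vertices V E) (total_adj E) k" if "3 \<le> k" "m + 1 \<le> k" for k
    using star_paths.equitably_choosable_total_graph[OF paths that] .
  then show ?thesis by auto
qed

end
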